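(* Let $t\in\{0,\dots,T\}$, and let $\hat\sigma_t:\mathcal{M}_t\to\hat{\mathcal{P}}_t$, $\hat\sigma_{t+1}:\mathcal{M}_{t+1}\to\hat{\mathcal{P}}_{t+1}$ with $\hat\Pi_t=\hat\sigma_t(M_t)$, $\hat\Pi_{t+1}=\hat\sigma_{t+1}(M_{t+1})$. Suppose (a) there are a function $\hat f_t:\hat{\mathcal{P}}_t\times\mathcal{U}_t\times\mathcal{Y}_{t+1}\to\hat{\mathcal{P}}_{t+1}$ and $L_{\hat f_t}\ge0$ with $\eta(\hat f_t(\hat\pi^1,u,y^1),\hat f_t(\hat\pi^2,u,y^2))\le L_{\hat f_t}(\eta(\hat\pi^1,\hat\pi^2)+\eta(y^1,y^2))$ for all arguments, and $\hat\sigma_{t+1}(m_{t+1})=\hat f_t(\hat\sigma_t(m_t),u_t,y_{t+1})$ whenever $m_{t+1}$ consists of $m_t,u_t,y_{t+1}$; (b) there is $\delta_t^{\mathrm{ob}}\ge0$ with $\mathcal{H}([[Y_{t+1}|m_t,u_t]],[[Y_{t+1}|\hat\sigma_t(m_t),u_t]])\le\delta_t^{\mathrm{ob}}$ for all $m_t\in[[M_t]]$, $u_t\in[[U_t]]$; and (c) there is $\lambda_t^{\mathrm{ob}}\ge0$ with $\mathcal{H}([[Y_{t+1}|\hat\pi_t^1,u_t]],[[Y_{t+1}|\hat\pi_t^2,u_t]])\le\lambda_t^{\mathrm{ob}}\eta(\hat\pi_t^1,\hat\pi_t^2)$ for all $\hat\pi_t^1,\hat\pi_t^2\in[[\hat\Pi_t]]$,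 $u_t\in[[U_t]]$. Then there is $\lambda_t\ge0$ with $\mathcal{H}([[\hat\Pi_{t+1}|\hat\pi_t^1,u_t]],[[\hat\Pi_{t+1}|\hat\pi_t^2,u_t]])\le\lambda_t\,\eta(\hat\pi_t^1,\hat\pi_t^2)$ for all $\hat\pi_t^1,\hat\pi_t^2\in[[\hat\Pi_t]]$, $u_t\in[[U_t]]$.
   Context: Uncertain variables: fix a sample space $\Omega$; an uncertain variable with values in a set $\mathcal{X}$ is a map $X:\Omega\to\mathcal{X}$, with marginal range $[[X]]:=\{X(\omega):\omega\in\Omega\}$; uncertain variables are independent if their joint range is the product of their marginal ranges. Hausdorff distance: for nonempty subsets $\mathcal{A},\mathcal{B}$ of a metric space $(\mathcal{S},\eta)$, $\mathcal{H}(\mathcal{A},\mathcal{B}):=\max\{\sup_{a\in\mathcal{A}}\inf_{b\in\mathcal{B}}\eta(a,b),\sup_{b\in\mathcal{B}}\inf_{a\in\mathcal{A}}\eta(a,b)\}$. System: horizon $T\in\mathbb{N}$. For $t=0,\dots,T$ there are independent disturbances $W_t\in\mathcal{W}_t$, actions $U_t\in\mathcal{U}_t$ taking values in a given set $[[U_t]]\subseteq\mathcal{U}_t$, observations $Y_0=h_0(W_0)$, $Y_{t+1}=h_{t+1}(W_{0:t},U_{0:t})$; $\mathcal{U}_t,\mathcal{W}_t,\mathcal{Y}_t$ are bounded subsets of a metric space $(\mathcal{S},\eta)$ and $\hat{\mathcal{P}}_t$ are bounded metric spaces (metric also denoted $\eta$). The memory is $M_t=(Y_{0:t},U_{0:t-1})\in\mathcal{M}_t:=\prod_{\ell=0}^t\mathcal{Y}_\ell\times\prod_{\ell=0}^{t-1}\mathcal{U}_\ell$.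 Strategy-independent ranges: for $m_t=(y_{0:t},u_{0:t-1})$ let $\mathcal{W}(m_t)$ be the set of $w_{0:t}\in\prod_{\ell=0}^t[[W_\ell]]$ with $y_0=h_0(w_0)$ and $y_\ell=h_\ell(w_{0:\ell-1},u_{0:\ell-1})$ for $\ell=1,\dots,t$. Let $[[M_t]]$ be the set of such $m_t$ with $u_\ell\in[[U_\ell]]$ and $\mathcal{W}(m_t)\neq\emptyset$. For $m_t\in[[M_t]]$, $u_t\in[[U_t]]$: $[[Y_{t+1}|m_t,u_t]]:=\{h_{t+1}(w_{0:t},u_{0:t}):w_{0:t}\in\mathcal{W}(m_t)\}$, $[[M_{t+1}|m_t,u_t]]:=\{(m_t,u_t,y_{t+1}):y_{t+1}\in[[Y_{t+1}|m_t,u_t]]\}$. With $\hat\Pi_t=\hat\sigma_t(M_t)$: $[[\hat\Pi_t]]:=\hat\sigma_t([[M_t]])$, $[[M_t|\hat\pi_t]]:=\{m_t\in[[M_t]]:\hat\sigma_t(m_t)=\hat\pi_t\}$, $[[\hat\Pi_{t+1}|m_t,u_t]]:=\{\hat\sigma_{t+1}(m_{t+1}):m_{t+1}\in[[M_{t+1}|m_t,u_t]]\}$, and for $Z\in\{Y_{t+1},\hat\Pi_{t+1}\}$, $[[Z|\hat\pi_t,u_t]]:=\bigcup_{m_t\in[[M_t|\hat\pi_t]]}[[Z|m_t,u_t]]$. *)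

theory Defs
  imports "HOL-Analysis.Analysis"
begin

text \<open>Hausdorff distance, as in the paper (used only for nonempty bounded sets,
  where the real-valued SUP/INF are the genuine suprema/infima).\<close>
definition hausdorff :: "'a::metric_space set \<Rightarrow> 'a set \<Rightarrow> real" where
  "hausdorff A B = max (SUP a\<in>A. INF b\<in>B. dist a b) (SUP b\<in>B. INF a\<in>A. dist a b)"

text \<open>A memory m_t = (y_{0:t}, u_{0:t-1}) is a pair of lists (ys, us) with
  length ys = t+1, length us = t.  All of Y, U, W take values in one metric type 's.
  Wr l = [[W_l]], Ur l = [[U_l]]; h0 = h_0; h t ws us = h_{t+1}(w_{0:t}, u_{0:t}).\<close>

definition Mspace :: "(nat \<Rightarrow> 's set) \<Rightarrow> (nat \<Rightarrow> 's set) \<Rightarrow> nat \<Rightarrow> ('s list \<times> 's list) set" where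
  "Mspace Ysp Usp t = {(ys, us). length ys = Suc t \<and> length us = t \<and>
     (\<forall>l<Suc t. ys ! l \<in> Ysp l) \<and> (\<forall>l<t. us ! l \<in> Usp l)}"

definition Wcons :: "(nat \<Rightarrow> 's set) \<Rightarrow> ('s \<Rightarrow> 's) \<Rightarrow> (nat \<Rightarrow> 's list \<Rightarrow> 's list \<Rightarrow> 's)
     \<Rightarrow> 's list \<times> 's list \<Rightarrow> 's list set" where
  "Wcons Wr h0 h m = {ws. length ws = length (fst m) \<and> (\<forall>l<length ws. ws ! l \<in> Wr l) \<and>
     fst m ! 0 = h0 (ws ! 0) \<and>
     (\<forall>l. 1 \<le> l \<and> l < length (fst m) \<longrightarrow> fst m ! l = h (l - 1) (take l ws) (take l (snd m)))}"

definition Mrange :: "(nat \<Rightarrow> 's set) \<Rightarrow> (nat \<Rightarrow> 's set) \<Rightarrow> (nat \<Rightarrow> 's set) \<Rightarrow> (nat \<Rightarrow> 's set)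
     \<Rightarrow> ('s \<Rightarrow> 's) \<Rightarrow> (nat \<Rightarrow> 's list \<Rightarrow> 's list \<Rightarrow> 's) \<Rightarrow> nat \<Rightarrow> ('s list \<times> 's list) set" where
  "Mrange Ysp Usp Wr Ur h0 h t = {m \<in> Mspace Ysp Usp t.
     (\<forall>l<t. snd m ! l \<in> Ur l) \<and> Wcons Wr h0 h m \<noteq> {}}"

definition Ynext_m :: "(nat \<Rightarrow> 's set) \<Rightarrow> ('s \<Rightarrow> 's) \<Rightarrow> (nat \<Rightarrow> 's list \<Rightarrow> 's list \<Rightarrow> 's)
     \<Rightarrow> 's list \<times> 's list \<Rightarrow> 's \<Rightarrow> 's set" where
  "Ynext_m Wr h0 h m u = (\<lambda>ws. h (length (snd m)) ws (snd m @ [u])) ` Wcons Wr h0 h m"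

definition Mnext_m :: "(nat \<Rightarrow> 's set) \<Rightarrow> ('s \<Rightarrow> 's) \<Rightarrow> (nat \<Rightarrow> 's list \<Rightarrow> 's list \<Rightarrow> 's)
     \<Rightarrow> 's list \<times> 's list \<Rightarrow> 's \<Rightarrow> ('s list \<times> 's list) set" where
  "Mnext_m Wr h0 h m u = (\<lambda>y. (fst m @ [y], snd m @ [u])) ` Ynext_m Wr h0 h m u"

definition Mgiven :: "(nat \<Rightarrow> 's set) \<Rightarrow> (nat \<Rightarrow> 's set) \<Rightarrow> (nat \<Rightarrow> 's set) \<Rightarrow> (nat \<Rightarrow> 's set)
     \<Rightarrow> ('s \<Rightarrow> 's) \<Rightarrow> (nat \<Rightarrow> 's list \<Rightarrow> 's list \<Rightarrow> 's) \<Rightarrow> nat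
     \<Rightarrow> ('s list \<times> 's list \<Rightarrow> 'p) \<Rightarrow> 'p \<Rightarrow> ('s list \<times> 's list) set" where
  "Mgiven Ysp Usp Wr Ur h0 h t \<sigma> \<pi> = {m \<in> Mrange Ysp Usp Wr Ur h0 h t. \<sigma> m = \<pi>}"

definition Ynext_pi :: "(nat \<Rightarrow> 's set) \<Rightarrow> (nat \<Rightarrow> 's set) \<Rightarrow> (nat \<Rightarrow> 's set) \<Rightarrow> (nat \<Rightarrow> 's set)
     \<Rightarrow> ('s \<Rightarrow> 's) \<Rightarrow> (nat \<Rightarrow> 's list \<Rightarrow> 's list \<Rightarrow> 's) \<Rightarrow> nat
     \<Rightarrow> ('s list \<times> 's list \<Rightarrow> 'p) \<Rightarrow> 'p \<Rightarrow> 's \<Rightarrow> 's set" where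
  "Ynext_pi Ysp Usp Wr Ur h0 h t \<sigma> \<pi> u =
     (\<Union>m\<in>Mgiven Ysp Usp Wr Ur h0 h t \<sigma> \<pi>. Ynext_m Wr h0 h m u)"

definition Pinext_pi :: "(nat \<Rightarrow> 's set) \<Rightarrow> (nat \<Rightarrow> 's set) \<Rightarrow> (nat \<Rightarrow> 's set) \<Rightarrow> (nat \<Rightarrow> 's set)
     \<Rightarrow> ('s \<Rightarrow> 's) \<Rightarrow> (nat \<Rightarrow> 's list \<Rightarrow> 's list \<Rightarrow> 's) \<Rightarrow> nat
     \<Rightarrow> ('s list \<times> 's list \<Rightarrow> 'p) \<Rightarrow> ('s list \<times> 's list \<Rightarrow> 'q) \<Rightarrow> 'p \<Rightarrow> 's \<Rightarrow> 'q set" where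
  "Pinext_pi Ysp Usp Wr Ur h0 h t \<sigma> \<sigma>' \<pi> u =
     (\<Union>m\<in>Mgiven Ysp Usp Wr Ur h0 h t \<sigma> \<pi>. \<sigma>' ` Mnext_m Wr h0 h m u)"

end

theory Submission
  imports Defs
begin

text \<open>The next estimate is obtained from the current one and the next observation through
  the Lipschitz map f, so [[Pi_{t+1} | pi, u]] is the image of [[Y_{t+1} | pi, u]] under f pi u.
  A map that is Lipschitz jointly in its parameter and its argument enlarges Hausdorff distances
  at most by its constant, hence hypothesis (c) gives the bound with lambda_t = Lf (1 + lamob).\<close>

lemma hausdorff_commute: "hausdorff A B = hausdorff B A"
  unfolding hausdorff_def by (simp add: dist_commute max.commute)

lemma hausdorff_le_if_approx:
  fixes A B :: "'a::metric_space set"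
  assumes "A \<noteq> {}" "B \<noteq> {}"
    and AB: "\<And>a e. a \<in> A \<Longrightarrow> e > 0 \<Longrightarrow> \<exists>b\<in>B. dist a b \<le> c + e"
    and BA: "\<And>b e. b \<in> B \<Longrightarrow> e > 0 \<Longrightarrow> \<exists>a\<in>A. dist a b \<le> c + e"
  shows "hausdorff A B \<le> c"
  unfolding hausdorff_def
proof (rule max.boundedI)
  show "(SUP a\<in>A. INF b\<in>B. dist a b) \<le> c"
  proof (rule cSUP_least[OF assms(1)])
    fix a assume a: "a \<in> A"
    show "(INF b\<in>B. dist a b) \<le> c"
    proof (rule field_le_epsilon)
      fix e :: real assume "e > 0"
      then obtain b where "b \<in> B" "dist a b \<le> c + e" using AB a by blast
      then show "(INF b\<in>B. dist a b) \<le> c + e"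
        by (intro cINF_lower2[OF bdd_belowI[of _ 0]]) auto
    qed
  qed
  show "(SUP b\<in>B. INF a\<in>A. dist a b) \<le> c"
  proof (rule cSUP_least[OF assms(2)])
    fix b assume b: "b \<in> B"
    show "(INF a\<in>A. dist a b) \<le> c"
    proof (rule field_le_epsilon)
      fix e :: real assume "e > 0"
      then obtain a where "a \<in> A" "dist a b \<le> c + e" using BA b by blast
      then show "(INF a\<in>A. dist a b) \<le> c + e"
        by (intro cINF_lower2[OF bdd_belowI[of _ 0]]) auto
    qed
  qed
qed

lemma hausdorff_le_imp_approx:
  fixes A B :: "'a::metric_space set"
  assumes "bounded A" "bounded B" "B \<noteq> {}" "hausdorff A B \<le> c" "a \<in> A" "e > 0"
  shows "\<exists>b\<in>B. dist a b < c + e"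
proof -
  obtain x r where xr: "\<And>z. z \<in> A \<union> B \<Longrightarrow> dist x z \<le> r"
    using assms(1,2) bounded_Un unfolding bounded_def by meson
  obtain b0 where b0: "b0 \<in> B" using assms(3) by blast
  have bdd_dist: "bdd_below ((\<lambda>b. dist a' b) ` B)" for a' by (rule bdd_belowI[of _ 0]) auto
  have "bdd_above ((\<lambda>a. INF b\<in>B. dist a b) ` A)"
  proof (rule bdd_aboveI2)
    fix a' assume "a' \<in> A"
    have "(INF b\<in>B. dist a' b) \<le> dist a' b0"
      by (rule cINF_lower[OF bdd_dist b0])
    also have "\<dots> \<le> dist x a' + dist x b0" by (rule dist_triangle3)
    also have "\<dots> \<le> 2 * r" using xr[of a'] xr[of b0] \<open>a' \<in> A\<close> b0 by simp
    finally show "(INF b\<in>B. dist a' b) \<le> 2 * r" .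
  qed
  then have "(INF b\<in>B. dist a b) \<le> (SUP a\<in>A. INF b\<in>B. dist a b)"
    using cSUP_upper[OF assms(5)] by blast
  also have "\<dots> \<le> c" using assms(4) unfolding hausdorff_def by simp
  finally have "(INF b\<in>B. dist a b) < c + e" using assms(6) by simp
  then show ?thesis using cINF_less_iff[OF assms(3) bdd_dist] by simp
qed

lemma hausdorff_image_le:
  fixes g1 g2 :: "'a::metric_space \<Rightarrow> 'b::metric_space"
  assumes "bounded A" "bounded B" "A \<noteq> {}" "B \<noteq> {}" "hausdorff A B \<le> c"
    and "L \<ge> 0"
    and lip: "\<And>x y. x \<in> A \<Longrightarrow> y \<in> B \<Longrightarrow> dist (g1 x) (g2 y) \<le> L * (d + dist x y)"
  shows "hausdorff (g1 ` A) (g2 ` B) \<le> L * (d + c)"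
proof -
  have close: "L * (d + dist x y) \<le> L * (d + c) + e"
    if "dist x y < c + e / (L + 1)" "e > 0" for x y and e :: real
  proof -
    have "L * dist x y \<le> L * (c + e / (L + 1))"
      using that \<open>L \<ge> 0\<close> by (intro mult_left_mono) auto
    then have "L * (d + dist x y) \<le> L * (d + c) + L * (e / (L + 1))"
      by (simp add: distrib_left)
    also have "L * (e / (L + 1)) \<le> e"
      using that \<open>L \<ge> 0\<close> by (simp add: field_simps)
    finally show ?thesis by simp
  qed
  show ?thesis
  proof (rule hausdorff_le_if_approx)
    fix a e assume "a \<in> g1 ` A" "(e::real) > 0"
    then obtain x where "x \<in> A" "a = g1 x" by blast
    with assms(1-5) obtain y where "y \<in> B" "dist x y < c + e / (L + 1)"
      using hausdorff_le_imp_approx[of A B c x "e / (L + 1)"] \<open>e > 0\<close> \<open>L \<ge> 0\<close> by auto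
    then show "\<exists>b\<in>g2 ` B. dist a b \<le> L * (d + c) + e"
      using lip[of x y] close[of x y e] \<open>x \<in> A\<close> \<open>a = g1 x\<close> \<open>e > 0\<close> by force
  next
    fix b e assume "b \<in> g2 ` B" "(e::real) > 0"
    then obtain y where "y \<in> B" "b = g2 y" by blast
    with assms(1-5) obtain x where "x \<in> A" "dist y x < c + e / (L + 1)"
      using hausdorff_le_imp_approx[of B A c y "e / (L + 1)"] hausdorff_commute[of A B]
        \<open>e > 0\<close> \<open>L \<ge> 0\<close> by auto
    then show "\<exists>a\<in>g1 ` A. dist a b \<le> L * (d + c) + e"
      using lip[of x y] close[of x y e] \<open>y \<in> B\<close> \<open>b = g2 y\<close> \<open>e > 0\<close>
      by (force simp: dist_commute)
  qed (use assms(3,4) in auto)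
qed

lemma Ynext_m_nonempty:
  assumes "m \<in> Mrange Ysp Usp Wr Ur h0 h t"
  shows "Ynext_m Wr h0 h m u \<noteq> {}"
  using assms unfolding Mrange_def Ynext_m_def by auto

lemma Ynext_pi_nonempty:
  assumes "\<pi> \<in> \<sigma> ` Mrange Ysp Usp Wr Ur h0 h t"
  shows "Ynext_pi Ysp Usp Wr Ur h0 h t \<sigma> \<pi> u \<noteq> {}"
  using assms Ynext_m_nonempty unfolding Ynext_pi_def Mgiven_def by fastforce

lemma Ynext_m_subset:
  assumes Ur_sub: "\<And>l. Ur l \<subseteq> Usp l" and Wr_sub: "\<And>l. Wr l \<subseteq> Wsp l"
    and h_in: "\<And>k ws us. length ws = Suc k \<Longrightarrow> length us = Suc k \<Longrightarrow>
                 (\<forall>l<Suc k. ws ! l \<in> Wsp l) \<Longrightarrow> (\<forall>l<Suc k. us ! l \<in> Usp l) \<Longrightarrow>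
                 h k ws us \<in> Ysp (Suc k)"
    and m: "m \<in> Mrange Ysp Usp Wr Ur h0 h t" and u: "u \<in> Ur t"
  shows "Ynext_m Wr h0 h m u \<subseteq> Ysp (Suc t)"
proof
  fix y assume "y \<in> Ynext_m Wr h0 h m u"
  then obtain ws where ws: "ws \<in> Wcons Wr h0 h m" and y: "y = h (length (snd m)) ws (snd m @ [u])"
    unfolding Ynext_m_def by blast
  have "length (snd m) = t" using m unfolding Mrange_def Mspace_def by auto
  have "length (fst m) = Suc t" using m unfolding Mrange_def Mspace_def by auto
  then have ws_len: "length ws = Suc t" and "\<forall>l<Suc t. ws ! l \<in> Wr l"
    using ws unfolding Wcons_def by auto
  then have ws_in: "\<forall>l<Suc t. ws ! l \<in> Wsp l" using Wr_sub by blast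
  have "u \<in> Usp t" using u Ur_sub by blast
  then have us_len: "length (snd m @ [u]) = Suc t" and us_in: "\<forall>l<Suc t. (snd m @ [u]) ! l \<in> Usp l"
    using m Ur_sub unfolding Mrange_def Mspace_def by (auto simp: nth_append less_Suc_eq)
  show "y \<in> Ysp (Suc t)"
    unfolding y \<open>length (snd m) = t\<close> by (rule h_in[OF ws_len us_len ws_in us_in])
qed

lemma Ynext_pi_subset:
  assumes "\<And>m. m \<in> Mrange Ysp Usp Wr Ur h0 h t \<Longrightarrow> Ynext_m Wr h0 h m u \<subseteq> Y"
  shows "Ynext_pi Ysp Usp Wr Ur h0 h t \<sigma> \<pi> u \<subseteq> Y"
  using assms unfolding Ynext_pi_def Mgiven_def by blast

lemma Pinext_pi_eq_image:
  assumes Ysub: "\<And>m. m \<in> Mrange Ysp Usp Wr Ur h0 h t \<Longrightarrow> Ynext_m Wr h0 h m u \<subseteq> Ysp (Suc t)"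
    and u: "u \<in> Usp t"
    and f_rec: "\<And>ys us y. (ys, us) \<in> Mspace Ysp Usp t \<Longrightarrow> y \<in> Ysp (Suc t) \<Longrightarrow>
                 \<sigma>' (ys @ [y], us @ [u]) = f (\<sigma> (ys, us)) u y"
  shows "Pinext_pi Ysp Usp Wr Ur h0 h t \<sigma> \<sigma>' \<pi> u = f \<pi> u ` Ynext_pi Ysp Usp Wr Ur h0 h t \<sigma> \<pi> u"
proof -
  have "\<sigma>' ` Mnext_m Wr h0 h m u = f \<pi> u ` Ynext_m Wr h0 h m u"
    if "m \<in> Mgiven Ysp Usp Wr Ur h0 h t \<sigma> \<pi>" for m
  proof -
    have m: "m \<in> Mrange Ysp Usp Wr Ur h0 h t" "\<sigma> m = \<pi>" "(fst m, snd m) \<in> Mspace Ysp Usp t"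
      using that unfolding Mgiven_def Mrange_def by auto
    then have "\<sigma>' (fst m @ [y], snd m @ [u]) = f \<pi> u y" if "y \<in> Ynext_m Wr h0 h m u" for y
      using f_rec[OF m(3)] Ysub[OF m(1)] that by auto
    then show ?thesis unfolding Mnext_m_def image_image by (rule image_cong[OF refl])
  qed
  then show ?thesis
    unfolding Pinext_pi_def Ynext_pi_def image_UN by simp
qed

theorem lemma3:
  fixes T t :: nat
    and Ysp Usp Wsp Ur Wr :: "nat \<Rightarrow> 's::metric_space set"
    and h0 :: "'s \<Rightarrow> 's" and h :: "nat \<Rightarrow> 's list \<Rightarrow> 's list \<Rightarrow> 's"
    and \<sigma> :: "'s list \<times> 's list \<Rightarrow> 'p::metric_space"
    and \<sigma>' :: "'s list \<times> 's list \<Rightarrow> 'q::metric_space"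
    and f :: "'p \<Rightarrow> 's \<Rightarrow> 's \<Rightarrow> 'q"
    and Lf \<delta> lamob :: real
  assumes tT: "t \<le> T"
    and bY: "\<And>l. bounded (Ysp l)" and bU: "\<And>l. bounded (Usp l)" and bW: "\<And>l. bounded (Wsp l)"
    and bP: "bounded (UNIV :: 'p set)" and bQ: "bounded (UNIV :: 'q set)"
    and Ur_sub: "\<And>l. Ur l \<subseteq> Usp l" and Wr_sub: "\<And>l. Wr l \<subseteq> Wsp l"
    and h0_in: "\<And>w. w \<in> Wsp 0 \<Longrightarrow> h0 w \<in> Ysp 0"
    and h_in: "\<And>k ws us. length ws = Suc k \<Longrightarrow> length us = Suc k \<Longrightarrow>
                 (\<forall>l<Suc k. ws ! l \<in> Wsp l) \<Longrightarrow> (\<forall>l<Suc k. us ! l \<in> Usp l) \<Longrightarrow>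
                 h k ws us \<in> Ysp (Suc k)"
    and Lf_nonneg: "Lf \<ge> 0"
    and f_lip: "\<And>\<pi>1 \<pi>2 u y1 y2. u \<in> Usp t \<Longrightarrow> y1 \<in> Ysp (Suc t) \<Longrightarrow> y2 \<in> Ysp (Suc t) \<Longrightarrow>
                 dist (f \<pi>1 u y1) (f \<pi>2 u y2) \<le> Lf * (dist \<pi>1 \<pi>2 + dist y1 y2)"
    and f_rec: "\<And>ys us u y. (ys, us) \<in> Mspace Ysp Usp t \<Longrightarrow> u \<in> Usp t \<Longrightarrow> y \<in> Ysp (Suc t) \<Longrightarrow>
                 \<sigma>' (ys @ [y], us @ [u]) = f (\<sigma> (ys, us)) u y"
    and \<delta>_nonneg: "\<delta> \<ge> 0"
    and hyp_b: "\<And>m u. m \<in> Mrange Ysp Usp Wr Ur h0 h t \<Longrightarrow> u \<in> Ur t \<Longrightarrow>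
                 hausdorff (Ynext_m Wr h0 h m u) (Ynext_pi Ysp Usp Wr Ur h0 h t \<sigma> (\<sigma> m) u) \<le> \<delta>"
    and lamob_nonneg: "lamob \<ge> 0"
    and hyp_c: "\<And>\<pi>1 \<pi>2 u. \<pi>1 \<in> \<sigma> ` Mrange Ysp Usp Wr Ur h0 h t \<Longrightarrow>
                 \<pi>2 \<in> \<sigma> ` Mrange Ysp Usp Wr Ur h0 h t \<Longrightarrow> u \<in> Ur t \<Longrightarrow>
                 hausdorff (Ynext_pi Ysp Usp Wr Ur h0 h t \<sigma> \<pi>1 u) (Ynext_pi Ysp Usp Wr Ur h0 h t \<sigma> \<pi>2 u)
                   \<le> lamob * dist \<pi>1 \<pi>2"
  shows "\<exists>lam\<ge>0. \<forall>\<pi>1 \<in> \<sigma> ` Mrange Ysp Usp Wr Ur h0 h t. \<forall>\<pi>2 \<in> \<sigma> ` Mrange Ysp Usp Wr Ur h0 h t.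
           \<forall>u \<in> Ur t.
             hausdorff (Pinext_pi Ysp Usp Wr Ur h0 h t \<sigma> \<sigma>' \<pi>1 u) (Pinext_pi Ysp Usp Wr Ur h0 h t \<sigma> \<sigma>' \<pi>2 u)
               \<le> lam * dist \<pi>1 \<pi>2"
proof (intro exI[of _ "Lf * (1 + lamob)"] conjI ballI)
  show "Lf * (1 + lamob) \<ge> 0" using Lf_nonneg lamob_nonneg by simp
  fix \<pi>1 \<pi>2 u
  assume \<pi>1: "\<pi>1 \<in> \<sigma> ` Mrange Ysp Usp Wr Ur h0 h t" and \<pi>2: "\<pi>2 \<in> \<sigma> ` Mrange Ysp Usp Wr Ur h0 h t"
    and u: "u \<in> Ur t"
  let ?Y = "\<lambda>\<pi>. Ynext_pi Ysp Usp Wr Ur h0 h t \<sigma> \<pi> u"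
  have Ysub: "Ynext_m Wr h0 h m u \<subseteq> Ysp (Suc t)" if "m \<in> Mrange Ysp Usp Wr Ur h0 h t" for m
    using Ynext_m_subset[OF Ur_sub Wr_sub h_in that u] .
  have uU: "u \<in> Usp t" using u Ur_sub by blast
  have Y_in: "?Y \<pi> \<subseteq> Ysp (Suc t)" for \<pi> by (rule Ynext_pi_subset[OF Ysub])
  have "hausdorff (f \<pi>1 u ` ?Y \<pi>1) (f \<pi>2 u ` ?Y \<pi>2) \<le> Lf * (dist \<pi>1 \<pi>2 + lamob * dist \<pi>1 \<pi>2)"
  proof (rule hausdorff_image_le[OF _ _ _ _ hyp_c[OF \<pi>1 \<pi>2 u] Lf_nonneg])
    show "dist (f \<pi>1 u y1) (f \<pi>2 u y2) \<le> Lf * (dist \<pi>1 \<pi>2 + dist y1 y2)"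
      if "y1 \<in> ?Y \<pi>1" "y2 \<in> ?Y \<pi>2" for y1 y2
      using f_lip[OF uU] Y_in that by blast
  qed (use bounded_subset[OF bY Y_in] Ynext_pi_nonempty[OF \<pi>1] Ynext_pi_nonempty[OF \<pi>2] in auto)
  moreover have "Pinext_pi Ysp Usp Wr Ur h0 h t \<sigma> \<sigma>' \<pi> u = f \<pi> u ` ?Y \<pi>" for \<pi>
    using Pinext_pi_eq_image[of Ysp Usp Wr Ur h0 h t u \<sigma>' f \<sigma>] Ysub uU f_rec by blast
  ultimately show "hausdorff (Pinext_pi Ysp Usp Wr Ur h0 h t \<sigma> \<sigma>' \<pi>1 u) (Pinext_pi Ysp Usp Wr Ur h0 h t \<sigma> \<sigma>' \<pi>2 u)
      \<le> Lf * (1 + lamob) * dist \<pi>1 \<pi>2"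
    by (simp add: algebra_simps)
qed

end
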